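(* Let $q$ be a prime power and $n$ a positive integer. Let $g, h\in \mathbb{F}_q[x]$ with $g(x)$ a divisor of $x^n-1$, let $f\in\mathbb{F}_{q^n}[x]$, and let $P(x)=f(L_g(x))+L_h(x)$. Suppose that $L_g(f(L_g(y)))=0$ for every $y\in \mathbb{F}_{q^n}$. Then $P$ is a permutation polynomial of $\mathbb{F}_{q^n}$ if and only if $\gcd(x^n-1, h(x))=1$. Moreover, the hypothesis $L_g(f(L_g(y)))=0$ for all $y\in\mathbb{F}_{q^n}$ holds, for instance, whenever $f(x)=L_G(f_0(x))$ for some $f_0\in \mathbb{F}_{q^n}[x]$, where $G(x)=\frac{x^n-1}{g(x)}$.
   Context: For a polynomial $u(x)=\sum_{i=0}^m a_i x^i\in\mathbb{F}_q[x]$, its linearized $q$-associate is $L_u(x)=\sum_{i=0}^m a_i x^{q^i}$. A permutation polynomial of $\mathbb{F}_{q^n}$ is a polynomial inducing a bijection of $\mathbb{F}_{q^n}$. *)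

theory Defs
  imports "HOL-Computational_Algebra.Computational_Algebra"
begin

definition linq :: "nat \<Rightarrow> 'a::comm_ring_1 poly \<Rightarrow> 'a \<Rightarrow> 'a" where
  "linq q u x = (\<Sum>i\<le>degree u. coeff u i * x ^ (q ^ i))"

text \<open>Polynomial with all coefficients in the subfield F_q = {x. x^q = x}.\<close>
definition over_Fq :: "nat \<Rightarrow> 'a::comm_ring_1 poly \<Rightarrow> bool" where
  "over_Fq q u \<longleftrightarrow> (\<forall>i. coeff u i ^ q = coeff u i)"

definition prime_power :: "nat \<Rightarrow> bool" where
  "prime_power q \<longleftrightarrow> (\<exists>p k. prime p \<and> k > 0 \<and> q = p ^ k)"

definition is_perm_poly :: "('a \<Rightarrow> 'a) \<Rightarrow> bool" where
  "is_perm_poly P \<longleftrightarrow> bij P"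

end

(*
  Since g and h have coefficients in F_q, the maps L_g and L_h are F_q-linear and commute,
  L_{uv} = L_u o L_v, and L_{x^n - 1} vanishes on F_{q^n}.  The hypothesis on f gives
  L_g o P = L_h o L_g.  If L_h is injective, P x = P y forces L_g x = L_g y, hence
  f(L_g x) = f(L_g y) and L_h x = L_h y.  Conversely, if P is onto then L_h maps the image of
  L_g onto itself, hence injectively; so every z in the kernel of L_h has L_g z = 0 and
  P z = P 0.  Finally L_h is injective iff gcd(x^n - 1, h) = 1: a Bezout relation
  a (x^n - 1) + b h = 1 makes L_b a left inverse of L_h, whereas for a nonconstant common factor d
  the image of L_d lies in the kernel of L_{(x^n - 1)/d}, which has at most q^(n - deg d) elements.
  The second claim is L_g o L_G = L_{x^n - 1} = 0.
*)

theory Submission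
  imports Defs
begin

lemma linq_eq_sum_lessThan:
  assumes "degree u < N"
  shows "linq q u x = (\<Sum>i<N. coeff u i * x ^ (q ^ i))"
  unfolding linq_def
  by (rule sum.mono_neutral_left) (use assms in \<open>auto simp: coeff_eq_0\<close>)

lemma linq_0 [simp]: "linq q 0 x = 0"
  by (simp add: linq_def)

lemma linq_1 [simp]: "linq q 1 x = x"
  by (simp add: linq_def)

lemma linq_add: "linq q (u + v) x = linq q u x + linq q v x"
proof -
  define N where "N = Suc (max (degree u) (degree v))"
  have "degree (u + v) < N" "degree u < N" "degree v < N"
    using degree_add_le_max[of u v] by (auto simp: N_def)
  then show ?thesis
    by (simp add: linq_eq_sum_lessThan[of _ N] sum.distrib distrib_right)
qed

lemma linq_diff: "linq q (u - v) x = linq q u x - linq q v x"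
  using linq_add[of q "u - v" v x] by (simp add: algebra_simps)

lemma linq_smult: "linq q (smult a u) x = a * linq q u x"
  using degree_smult_le[of a u]
  by (simp add: linq_eq_sum_lessThan[of _ "Suc (degree u)"] sum_distrib_left mult.assoc distrib_left)

lemma linq_monom: "linq q (monom c n) x = c * x ^ (q ^ n)"
  using degree_monom_le[of c n]
  by (simp add: linq_eq_sum_lessThan[of _ "Suc n"] if_distrib)

lemma linq_pCons: "linq q (pCons a u) x = a * x + linq q u (x ^ q)"
proof -
  have "degree (pCons a u) < Suc (Suc (degree u))"
    using degree_pCons_le[of a u] by simp
  then have "linq q (pCons a u) x = (\<Sum>i<Suc (Suc (degree u)). coeff (pCons a u) i * x ^ (q ^ i))"
    by (rule linq_eq_sum_lessThan)
  also have "\<dots> = a * x + (\<Sum>i<Suc (degree u). coeff u i * x ^ (q ^ Suc i))"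
    by (subst sum.lessThan_Suc_shift) simp
  also have "(\<Sum>i<Suc (degree u). coeff u i * x ^ (q ^ Suc i)) = linq q u (x ^ q)"
    by (simp add: linq_eq_sum_lessThan[of u "Suc (degree u)"] power_mult mult.commute)
  finally show ?thesis .
qed

definition linq_poly :: "nat \<Rightarrow> 'a::comm_ring_1 poly \<Rightarrow> 'a poly" where
  "linq_poly q u = (\<Sum>i\<le>degree u. monom (coeff u i) (q ^ i))"

lemma poly_linq_poly: "poly (linq_poly q u) x = linq q u x"
  by (simp add: linq_poly_def linq_def poly_sum poly_monom)

lemma degree_linq_poly_le:
  assumes "q > 0"
  shows "degree (linq_poly q u) \<le> q ^ degree u"
  unfolding linq_poly_def
  by (rule degree_sum_le)
     (use assms in \<open>auto intro!: order.trans[OF degree_monom_le] power_increasing\<close>)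

lemma linq_poly_nonzero:
  assumes "u \<noteq> 0" "q \<ge> 2"
  shows "linq_poly q u \<noteq> 0"
proof -
  have "coeff (linq_poly q u) (q ^ degree u) = (\<Sum>i\<le>degree u. if i = degree u then coeff u i else 0)"
    unfolding linq_poly_def coeff_sum coeff_monom
    by (intro sum.cong refl) (use assms in \<open>auto\<close>)
  then show ?thesis using assms by auto
qed

lemma card_linq_roots_le:
  fixes u :: "'a::{comm_ring_1,ring_no_zero_divisors} poly"
  assumes "u \<noteq> 0" "q \<ge> 2"
  shows "card {x. linq q u x = 0} \<le> q ^ degree u"
proof -
  have "card {x. linq q u x = 0} = card {x. poly (linq_poly q u) x = 0}"
    by (simp add: poly_linq_poly)
  also have "\<dots> \<le> degree (linq_poly q u)"
    by (rule card_poly_roots_bound) (rule linq_poly_nonzero[OF assms])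
  also have "\<dots> \<le> q ^ degree u"
    using assms by (intro degree_linq_poly_le) simp
  finally show ?thesis .
qed

lemma bij_perturbed_additive_iff_inj:
  fixes A B F :: "'a::{ab_group_add,finite} \<Rightarrow> 'a"
  assumes A: "additive A" and B: "additive B"
    and commute: "\<And>x. A (B x) = B (A x)"
    and annihilate: "\<And>y. A (F (A y)) = 0"
  shows "bij (\<lambda>x. F (A x) + B x) \<longleftrightarrow> inj B"
proof -
  define P where "P x = F (A x) + B x" for x
  have A_P: "A (P x) = B (A x)" for x
    by (simp add: P_def additive.add[OF A] annihilate commute)
  show ?thesis
    unfolding P_def[symmetric]
  proof
    assume "bij P"
    have "B ` range A = range A"
    proof
      show "B ` range A \<subseteq> range A" by (auto simp flip: commute)
      show "range A \<subseteq> B ` range A"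
      proof
        fix u assume "u \<in> range A"
        then obtain x where "u = A (P x)"
          using \<open>bij P\<close> by (metis bij_pointE rangeE)
        then show "u \<in> B ` range A" by (simp add: A_P)
      qed
    qed
    then have inj_on_range: "inj_on B (range A)"
      by (intro eq_card_imp_inj_on) auto
    have "z = 0" if "B z = 0" for z
    proof -
      have "B (A z) = B (A 0)"
        using that by (simp flip: commute add: additive.zero[OF A] additive.zero[OF B])
      then have "A z = A 0"
        using inj_on_range by (auto dest: inj_onD)
      then have "P z = P 0"
        using that by (simp add: P_def additive.zero[OF B])
      then show "z = 0"
        using \<open>bij P\<close> by (auto dest: bij_is_inj injD)
    qed
    then show "inj B"
      by (intro injI) (metis additive.diff[OF B] right_minus_eq)
  next
    assume "inj B"
    have "inj P"
    proof (rule injI)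
      fix x y assume "P x = P y"
      then have "B (A x) = B (A y)" by (metis A_P)
      then have "A x = A y" using \<open>inj B\<close> by (simp add: inj_eq)
      with \<open>P x = P y\<close> have "B x = B y" by (simp add: P_def)
      then show "x = y" using \<open>inj B\<close> by (simp add: inj_eq)
    qed
    then show "bij P"
      by (simp add: bij_def finite_UNIV_inj_surj)
  qed
qed

(* The library's finite_field_power_card_eq_same requires the sort finite_field. *)
lemma power_card_eq_self:
  fixes x :: "'a::field"
  assumes "finite (UNIV :: 'a set)"
  shows "x ^ card (UNIV :: 'a set) = x"
proof (cases "x = 0")
  case True
  then show ?thesis using assms by (simp add: finite_UNIV_card_ge_0)
next
  case False
  define N where "N = UNIV - {0 :: 'a}"
  have "(*) x ` N = N"
  proof
    show "(*) x ` N \<subseteq> N" using False by (auto simp: N_def)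
    show "N \<subseteq> (*) x ` N"
    proof
      fix y assume "y \<in> N"
      then have "y / x \<in> N" "y = x * (y / x)" using False by (auto simp: N_def)
      then show "y \<in> (*) x ` N" by blast
    qed
  qed
  moreover have "inj_on ((*) x) N"
    using False by (auto intro: inj_onI)
  ultimately have "prod id N = prod ((*) x) N"
    using prod.reindex[of "(*) x" N id] by simp
  also have "\<dots> = x ^ card N * prod id N"
    by (simp add: prod.distrib)
  finally have "x ^ card N = 1"
    by (simp add: N_def assms)
  moreover have "card (UNIV :: 'a set) = Suc (card N)"
    using assms by (simp add: N_def card_Diff_singleton finite_UNIV_card_ge_0)
  ultimately show ?thesis by simp
qed

lemma CHAR_dvd_card:
  assumes "finite (UNIV :: 'a::ring_1 set)"
  shows "CHAR('a) dvd card (UNIV :: 'a set)"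
proof -
  have "(\<Sum>x\<in>UNIV. x + 1) = (\<Sum>x\<in>(UNIV :: 'a set). x)"
    by (rule sum.reindex_bij_witness[of _ "\<lambda>y. y - 1" "\<lambda>y. y + 1"]) auto
  then have "of_nat (card (UNIV :: 'a set)) = (0 :: 'a)"
    by (simp add: sum.distrib)
  then show ?thesis by (simp add: of_nat_eq_0_iff_char_dvd)
qed

locale frobenius_power =
  fixes ty :: "'a::field itself" and q :: nat
  assumes additive_power_q: "additive (\<lambda>x::'a. x ^ q)"
begin

sublocale power_q: additive "\<lambda>x::'a. x ^ q"
  by (rule additive_power_q)

lemma q_pos: "q > 0"
  using power_q.zero by (cases q) auto

lemma power_q_power_add: "((x::'a) + y) ^ (q ^ i) = x ^ (q ^ i) + y ^ (q ^ i)"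
proof (induction i arbitrary: x y)
  case (Suc i)
  have "(x + y) ^ (q ^ Suc i) = ((x + y) ^ q) ^ (q ^ i)"
    by (simp add: power_mult mult.commute)
  also have "\<dots> = (x ^ q) ^ (q ^ i) + (y ^ q) ^ (q ^ i)"
    by (simp add: power_q.add Suc)
  finally show ?case by (simp add: power_mult mult.commute)
qed simp

lemma additive_linq: "additive (linq q u :: 'a \<Rightarrow> 'a)"
  by unfold_locales (simp add: linq_def power_q_power_add distrib_left sum.distrib)

lemma linq_power_q:
  assumes "over_Fq q u"
  shows "linq q u ((x::'a) ^ q) = linq q u x ^ q"
  using assms
  by (simp add: linq_def power_q.sum over_Fq_def power_mult_distrib mult.commute
           flip: power_mult)

lemma linq_mult:
  assumes "over_Fq q v"
  shows "linq q (u * v) (x::'a) = linq q u (linq q v x)"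
proof (induction u arbitrary: x rule: pCons_induct)
  case (pCons a u)
  have "linq q (pCons a u * v) x = a * linq q v x + linq q (u * v) (x ^ q)"
    by (simp add: linq_add linq_smult linq_pCons)
  also have "\<dots> = a * linq q v x + linq q u (linq q v x ^ q)"
    by (simp add: pCons linq_power_q assms)
  finally show ?case
    by (simp add: linq_pCons)
qed simp

lemma linq_commute:
  assumes "over_Fq q u" "over_Fq q v"
  shows "linq q u (linq q v (x::'a)) = linq q v (linq q u x)"
  using assms by (simp flip: linq_mult add: mult.commute)

lemma over_Fq_1: "over_Fq q (1 :: 'a poly)"
  using q_pos by (simp add: over_Fq_def)

lemma over_Fq_monom_1: "over_Fq q (monom (1 :: 'a) n)"
  using q_pos by (simp add: over_Fq_def)

lemma over_Fq_diff:
  assumes "over_Fq q u" "over_Fq q v"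
  shows "over_Fq q (u - v :: 'a poly)"
  using assms by (simp add: over_Fq_def power_q.diff)

definition frob_poly :: "'a poly \<Rightarrow> 'a poly" where
  "frob_poly p = map_poly (\<lambda>c. c ^ q) p"

lemma coeff_frob_poly: "coeff (frob_poly p) n = coeff p n ^ q"
  using q_pos by (simp add: frob_poly_def coeff_map_poly)

lemma degree_frob_poly: "degree (frob_poly p) = degree p"
  unfolding frob_poly_def by (rule degree_map_poly) simp

lemma frob_poly_mult: "frob_poly (u * v) = frob_poly u * frob_poly v"
  by (rule poly_eqI) (simp add: coeff_frob_poly coeff_mult power_q.sum power_mult_distrib)

lemma over_Fq_iff_frob_poly_eq: "over_Fq q u \<longleftrightarrow> frob_poly u = u"
  by (simp add: over_Fq_def poly_eq_iff coeff_frob_poly)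

lemma over_Fq_div:
  assumes "over_Fq q g" "over_Fq q u" "g dvd u"
  shows "over_Fq q (u div g :: 'a poly)"
proof (cases "g = 0")
  case False
  from \<open>g dvd u\<close> have "g * frob_poly (u div g) = g * (u div g)"
    using frob_poly_mult[of g "u div g"] assms(1,2) by (simp add: over_Fq_iff_frob_poly_eq)
  then show ?thesis
    using False by (simp add: over_Fq_iff_frob_poly_eq)
qed (simp add: over_Fq_def q_pos)

end

lemma over_Fq_gcd:
  fixes a b :: "'a::field_gcd poly"
  assumes "frobenius_power TYPE('a) q" "over_Fq q a" "over_Fq q b" "a \<noteq> 0"
  shows "over_Fq q (gcd a b)"
proof -
  interpret frobenius_power "TYPE('a)" q by fact
  define d where "d = gcd a b"
  have "d \<noteq> 0" using \<open>a \<noteq> 0\<close> by (simp add: d_def)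
  have "frob_poly d dvd c" if "over_Fq q c" "d dvd c" for c
  proof -
    from \<open>d dvd c\<close> obtain k where "c = d * k" ..
    with \<open>over_Fq q c\<close> have "c = frob_poly d * frob_poly k"
      by (metis frob_poly_mult over_Fq_iff_frob_poly_eq)
    then show ?thesis by simp
  qed
  then have "frob_poly d dvd d"
    using assms(2,3) by (simp add: d_def)
  then obtain k where k: "d = frob_poly d * k" ..
  with \<open>d \<noteq> 0\<close> have "frob_poly d \<noteq> 0" "k \<noteq> 0" by auto
  with k have "degree k = 0"
    by (metis degree_mult_eq degree_frob_poly add_left_cancel add_0_right)
  then obtain c where c: "k = [:c:]"
    by (rule degree_eq_zeroE)
  have "lead_coeff d = 1"
    using \<open>a \<noteq> 0\<close> unit_factor_gcd[of a b]
    by (simp add: d_def unit_factor_poly_def is_unit_unit_factor dvd_field_iff one_pCons)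
  then have "lead_coeff (frob_poly d) = 1"
    using q_pos by (simp add: coeff_frob_poly degree_frob_poly)
  moreover have "lead_coeff d = lead_coeff (frob_poly d) * c"
    using k c by (metis lead_coeff_mult lead_coeff_pCons(2))
  ultimately have "k = 1"
    using c \<open>lead_coeff d = 1\<close> by (simp add: one_pCons)
  with k show ?thesis
    by (simp add: over_Fq_iff_frob_poly_eq d_def)
qed

lemma degree_monom_1_minus_1:
  assumes "n > 0"
  shows "degree (monom (1 :: 'a::comm_ring_1) n - 1) = n"
proof -
  have "degree (monom (1 :: 'a) n + (- 1)) = degree (monom (1 :: 'a) n)"
    by (rule degree_add_eq_left) (use assms in \<open>simp add: degree_monom_eq\<close>)
  then show ?thesis by (simp add: degree_monom_eq)
qed

locale finite_field_qn =
  fixes ty :: "'a::{field_gcd,finite} itself" and q n :: nat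
  assumes prime_power_q: "prime_power q"
    and n_pos: "n > 0"
    and card_UNIV: "card (UNIV :: 'a set) = q ^ n"
begin

lemma q_eq_CHAR_power: "\<exists>k. q = CHAR('a) ^ k"
proof -
  obtain p k where pk: "prime p" "q = p ^ k"
    using prime_power_q by (auto simp: prime_power_def)
  have "prime CHAR('a)"
    by (simp add: finite_imp_CHAR_pos prime_CHAR_semidom)
  moreover have "CHAR('a) dvd p ^ (k * n)"
    using CHAR_dvd_card[where 'a = 'a] card_UNIV pk by (simp add: power_mult)
  ultimately have "CHAR('a) = p"
    using pk by (metis prime_dvd_power primes_dvd_imp_eq)
  with pk show ?thesis by blast
qed

sublocale frobenius_power ty q
proof
  obtain k where "q = CHAR('a) ^ k"
    using q_eq_CHAR_power ..
  then show "(x + y :: 'a) ^ q = x ^ q + y ^ q" for x y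
    by (simp add: freshmans_dream' finite_imp_CHAR_pos prime_CHAR_semidom)
qed

lemma q_ge_2: "q \<ge> 2"
proof -
  obtain p k where "prime p" "k > 0" "q = p ^ k"
    using prime_power_q by (auto simp: prime_power_def)
  then show ?thesis
    using prime_ge_2_nat[of p] self_le_power[of p k] by simp
qed

lemma degree_monom_1_minus_1_n [simp]: "degree (monom (1 :: 'a) n - 1) = n"
  using n_pos by (rule degree_monom_1_minus_1)

lemma monom_1_minus_1_nonzero: "monom (1 :: 'a) n - 1 \<noteq> 0"
proof
  assume "monom (1 :: 'a) n - 1 = 0"
  then have "degree (monom (1 :: 'a) n - 1) = 0" by simp
  with n_pos show False by simp
qed

lemma linq_monom_1_minus_1_eq_0: "linq q (monom 1 n - 1) (x :: 'a) = 0"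
proof -
  have "x ^ (q ^ n) = x"
    using power_card_eq_self[of x] card_UNIV by simp
  then show ?thesis
    by (simp add: linq_diff linq_monom)
qed

lemma over_Fq_monom_1_minus_1: "over_Fq q (monom (1 :: 'a) n - 1)"
  by (intro over_Fq_diff over_Fq_monom_1 over_Fq_1)

lemma linq_cofactor_eq_0:
  assumes "over_Fq q g" "g dvd monom 1 n - 1"
  shows "linq q g (linq q ((monom 1 n - 1) div g) (x :: 'a)) = 0"
proof -
  have "over_Fq q ((monom 1 n - 1) div g)"
    using assms over_Fq_monom_1_minus_1 by (intro over_Fq_div)
  then have "linq q g (linq q ((monom 1 n - 1) div g) x) = linq q (g * ((monom 1 n - 1) div g)) x"
    by (simp add: linq_mult)
  with assms(2) show ?thesis
    by (simp add: linq_monom_1_minus_1_eq_0)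
qed

lemma inj_linq_if_coprime:
  assumes "over_Fq q h" "coprime (monom 1 n - 1) h"
  shows "inj (linq q h :: 'a \<Rightarrow> 'a)"
proof -
  obtain a b where bezout: "a * (monom 1 n - 1) + b * h = 1"
    using bezout_coefficients_fst_snd[of "monom 1 n - 1" h] assms(2)
    by (metis coprime_iff_gcd_eq_1)
  have "linq q b (linq q h x) = x" for x :: 'a
  proof -
    have "x = linq q (a * (monom 1 n - 1) + b * h) x"
      by (simp add: bezout)
    also have "\<dots> = linq q b (linq q h x)"
      using assms(1) over_Fq_monom_1_minus_1
      by (simp add: linq_add linq_mult linq_monom_1_minus_1_eq_0 additive.zero[OF additive_linq])
    finally show ?thesis ..
  qed
  then show ?thesis
    by (metis injI)
qed

lemma not_inj_linq_if_proper_dvd: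
  assumes "over_Fq q d" "d dvd monom 1 n - 1" "degree d > 0"
  shows "\<not> inj (linq q d :: 'a \<Rightarrow> 'a)"
proof
  assume "inj (linq q d :: 'a \<Rightarrow> 'a)"
  obtain s where s: "monom 1 n - 1 = d * s"
    using assms(2) ..
  have "d \<noteq> 0" "s \<noteq> 0"
    using s monom_1_minus_1_nonzero by auto
  then have "degree d + degree s = n"
    using s degree_monom_1_minus_1_n by (simp add: degree_mult_eq)
  with assms(3) have "degree s < n"
    by linarith
  have "range (linq q d) \<subseteq> {y :: 'a. linq q s y = 0}"
    using assms(1) linq_monom_1_minus_1_eq_0 by (auto simp: s mult.commute simp flip: linq_mult)
  then have "card (range (linq q d :: 'a \<Rightarrow> 'a)) \<le> q ^ degree s"
    using card_linq_roots_le[OF \<open>s \<noteq> 0\<close> q_ge_2] by (meson card_mono finite order.trans)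
  also have "\<dots> < card (UNIV :: 'a set)"
    using \<open>degree s < n\<close> q_ge_2 card_UNIV by (simp add: power_strict_increasing)
  finally show False
    using \<open>inj (linq q d)\<close> by (simp add: card_image)
qed

lemma inj_linq_iff_coprime:
  assumes "over_Fq q h"
  shows "inj (linq q h :: 'a \<Rightarrow> 'a) \<longleftrightarrow> coprime (monom 1 n - 1) h"
proof
  assume inj: "inj (linq q h :: 'a \<Rightarrow> 'a)"
  show "coprime (monom 1 n - 1) h"
  proof (rule ccontr)
    define d where "d = gcd (monom 1 n - 1) h"
    assume "\<not> coprime (monom 1 n - 1) h"
    moreover have "d \<noteq> 0"
      using monom_1_minus_1_nonzero by (simp add: d_def)
    ultimately have "degree d > 0"
      using is_unit_iff_degree[of d] by (simp add: d_def coprime_iff_gcd_eq_1)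
    moreover have "over_Fq q d"
      unfolding d_def
      using frobenius_power_axioms over_Fq_monom_1_minus_1 assms monom_1_minus_1_nonzero
      by (rule over_Fq_gcd)
    ultimately have "\<not> inj (linq q d :: 'a \<Rightarrow> 'a)"
      by (intro not_inj_linq_if_proper_dvd) (auto simp: d_def)
    moreover obtain t where "h = t * d"
      by (metis d_def gcd_dvd2 dvd_def mult.commute)
    then have "linq q h = linq q t \<circ> linq q d"
      using \<open>over_Fq q d\<close> by (auto simp: linq_mult)
    ultimately show False
      using inj inj_on_imageI2 by metis
  qed
qed (use assms inj_linq_if_coprime in blast)

end

theorem proposition2p6:
  fixes q n :: nat and g h :: "'a::{field_gcd,finite} poly"
  assumes "prime_power q" and "n > 0" and "card (UNIV :: 'a set) = q ^ n"
    and "over_Fq q g" and "over_Fq q h"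
    and "g dvd (monom 1 n - 1)"
  shows "(\<forall>f :: 'a poly. (\<forall>y. linq q g (poly f (linq q g y)) = 0) \<longrightarrow>
            (is_perm_poly (\<lambda>x. poly f (linq q g x) + linq q h x)
               \<longleftrightarrow> gcd (monom 1 n - 1) h = 1))
       \<and> (\<forall>(f0 :: 'a poly) y. linq q g (linq q ((monom 1 n - 1) div g) (poly f0 (linq q g y))) = 0)"
proof -
  interpret finite_field_qn "TYPE('a)" q n
    using assms(1-3) by unfold_locales
  have "is_perm_poly (\<lambda>x. poly f (linq q g x) + linq q h x) \<longleftrightarrow> gcd (monom 1 n - 1) h = 1"
    if "\<forall>y. linq q g (poly f (linq q g y)) = 0" for f
    unfolding is_perm_poly_def
    using that assms(4,5)
    by (simp add: bij_perturbed_additive_iff_inj additive_linq linq_commute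
        inj_linq_iff_coprime coprime_iff_gcd_eq_1)
  with linq_cofactor_eq_0[OF assms(4,6)] show ?thesis
    by blast
qed

end
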